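(* Let $G$ be a connected graph and $P$ an isometric path in $G$. If $P$ is bypath-free in $G$, then $P$ is $1$-leisurely-guardable.
   Context: A path $P$ in $G$ is isometric if $d_P(x,y)=d_G(x,y)$ for all $x,y\in V(P)$. For a subgraph $H$ of $G$ and an isometric path $P=v_1\cdots v_k$ in $H$, a bypath of $P$ in $H$ is a path $B=b_1\cdots b_t$ with $t\ge3$, $V(B)\subseteq V(H)$, $b_1=v_i$, $b_t=v_j$ for some $i<j$, $V(B)\cap V(P)=\{v_i,v_j\}$, and such that $v_1\cdots v_ib_2\cdots b_{t-1}v_j\cdots v_k$ is also an isometric path in $H$; $P$ is bypath-free in $H$ if $H$ contains no bypath of $P$. Cops and robber game on $G$: cops choose starting vertices, then the robber; then they alternate turns, each moving pieces to adjacent vertices or staying; capture occurs when a cop occupies the robber's vertex. An isometric (induced) subgraph $H$ is $k$-guardable if $k$ cops have a strategy such that after finitely many moves they are on vertices of $H$, stay in $H$ thereafter, and whenever the robber enters $H$ he is captured by one of them in the next turn. $H$ is $k$-leisurely-guardable if it is $k$-guardable via a $k$-guarding strategy with $k$ cops for which there is an integer $t$ such that in every sequence of $t$ consecutive moves there is a move in which at least one of these cops stays still. *)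

theory Defs
  imports Main
begin

definition graph :: "'a set \<Rightarrow> ('a \<Rightarrow> 'a \<Rightarrow> bool) \<Rightarrow> bool" where
  "graph V adj \<longleftrightarrow> finite V \<and> (\<forall>x y. adj x y \<longrightarrow> x \<in> V \<and> y \<in> V)
     \<and> (\<forall>x y. adj x y \<longrightarrow> adj y x) \<and> (\<forall>x. \<not> adj x x)"

definition is_walk :: "'a set \<Rightarrow> ('a \<Rightarrow> 'a \<Rightarrow> bool) \<Rightarrow> 'a list \<Rightarrow> bool" where
  "is_walk V adj xs \<longleftrightarrow> xs \<noteq> [] \<and> set xs \<subseteq> V
     \<and> (\<forall>i. Suc i < length xs \<longrightarrow> adj (xs ! i) (xs ! Suc i))"

definition is_path :: "'a set \<Rightarrow> ('a \<Rightarrow> 'a \<Rightarrow> bool) \<Rightarrow> 'a list \<Rightarrow> bool" where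
  "is_path V adj xs \<longleftrightarrow> is_walk V adj xs \<and> distinct xs"

definition connected_graph :: "'a set \<Rightarrow> ('a \<Rightarrow> 'a \<Rightarrow> bool) \<Rightarrow> bool" where
  "connected_graph V adj \<longleftrightarrow> graph V adj \<and>
     (\<forall>x\<in>V. \<forall>y\<in>V. \<exists>xs. is_walk V adj xs \<and> hd xs = x \<and> last xs = y)"

definition gdist :: "'a set \<Rightarrow> ('a \<Rightarrow> 'a \<Rightarrow> bool) \<Rightarrow> 'a \<Rightarrow> 'a \<Rightarrow> nat" where
  "gdist V adj x y = (LEAST n. \<exists>xs. is_walk V adj xs \<and> hd xs = x \<and> last xs = y
                                     \<and> length xs = Suc n)"

text \<open>The path P viewed as a subgraph (its edges are the consecutive pairs).\<close>

definition path_adj :: "'a list \<Rightarrow> 'a \<Rightarrow> 'a \<Rightarrow> bool" where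
  "path_adj P x y \<longleftrightarrow> (\<exists>i. Suc i < length P \<and>
      ((x = P ! i \<and> y = P ! Suc i) \<or> (y = P ! i \<and> x = P ! Suc i)))"

definition isometric_path :: "'a set \<Rightarrow> ('a \<Rightarrow> 'a \<Rightarrow> bool) \<Rightarrow> 'a list \<Rightarrow> bool" where
  "isometric_path V adj P \<longleftrightarrow> is_path V adj P \<and>
     (\<forall>x\<in>set P. \<forall>y\<in>set P. gdist (set P) (path_adj P) x y = gdist V adj x y)"

text \<open>Bypaths (0-indexed: P ! i = v_{i+1}).  B = b_1 ... b_t, t >= 3, from P!i to P!j,
 i < j, meeting P only in its endpoints, such that
 v_1..v_i b_2..b_{t-1} v_j..v_k is again an isometric path of the graph.\<close>

definition bypath :: "'a set \<Rightarrow> ('a \<Rightarrow> 'a \<Rightarrow> bool) \<Rightarrow> 'a list \<Rightarrow> 'a list \<Rightarrow> bool" where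
  "bypath V adj P B \<longleftrightarrow> is_path V adj B \<and> length B \<ge> 3 \<and> set B \<subseteq> V \<and>
     (\<exists>i j. i < j \<and> j < length P \<and> hd B = P ! i \<and> last B = P ! j \<and>
        set B \<inter> set P = {P ! i, P ! j} \<and>
        isometric_path V adj (take (Suc i) P @ butlast (tl B) @ drop j P))"

definition bypath_free :: "'a set \<Rightarrow> ('a \<Rightarrow> 'a \<Rightarrow> bool) \<Rightarrow> 'a list \<Rightarrow> bool" where
  "bypath_free V adj P \<longleftrightarrow> \<not> (\<exists>B. bypath V adj P B)"

text \<open>A robber play is an infinite sequence of positions r 0, r 1, ...; r 0 is the
starting vertex, r n (n >= 1) the position after his n-th move.\<close>

definition robber_walk :: "'a set \<Rightarrow> ('a \<Rightarrow> 'a \<Rightarrow> bool) \<Rightarrow> (nat \<Rightarrow> 'a) \<Rightarrow> bool" where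
  "robber_walk V adj r \<longleftrightarrow> (\<forall>n. r n \<in> V) \<and> (\<forall>n. r (Suc n) = r n \<or> adj (r n) (r (Suc n)))"

text \<open>A (deterministic) strategy of a single cop maps the robber positions seen so far
to the cop's next position: the starting vertex is sigma [], and the position after
the n-th cop move (which is made after seeing r 0 .. r (n-1)) is sigma [r 0, ..., r (n-1)].
Order of events: c 0, r 0, c 1, r 1, c 2, r 2, ...\<close>

definition cpos :: "('a list \<Rightarrow> 'a) \<Rightarrow> (nat \<Rightarrow> 'a) \<Rightarrow> nat \<Rightarrow> 'a" where
  "cpos \<sigma> r n = \<sigma> (map r [0..<n])"

definition legal_cop_strategy :: "'a set \<Rightarrow> ('a \<Rightarrow> 'a \<Rightarrow> bool) \<Rightarrow> ('a list \<Rightarrow> 'a) \<Rightarrow> bool" where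
  "legal_cop_strategy V adj \<sigma> \<longleftrightarrow> (\<forall>r. robber_walk V adj r \<longrightarrow>
      \<sigma> [] \<in> V \<and> (\<forall>n. cpos \<sigma> r (Suc n) = cpos \<sigma> r n \<or> adj (cpos \<sigma> r n) (cpos \<sigma> r (Suc n))))"

text \<open>The game is still running when the cop is about to make move n
(no capture among the events c 0, r 0, ..., c (n-1), r (n-1)).\<close>

definition alive_before_cop :: "('a list \<Rightarrow> 'a) \<Rightarrow> (nat \<Rightarrow> 'a) \<Rightarrow> nat \<Rightarrow> bool" where
  "alive_before_cop \<sigma> r n \<longleftrightarrow> (\<forall>m<n. r m \<noteq> cpos \<sigma> r m \<and> (0 < m \<longrightarrow> cpos \<sigma> r m \<noteq> r (m - 1)))"

text \<open>The game is still running when the robber is about to take position r n.\<close>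

definition alive_before_rob :: "('a list \<Rightarrow> 'a) \<Rightarrow> (nat \<Rightarrow> 'a) \<Rightarrow> nat \<Rightarrow> bool" where
  "alive_before_rob \<sigma> r n \<longleftrightarrow> alive_before_cop \<sigma> r n \<and> (0 < n \<longrightarrow> cpos \<sigma> r n \<noteq> r (n - 1))"

text \<open>sigma guards the vertex set H: against every robber play, after finitely many moves
the cop is in H and stays there, and whenever the robber is on H he is captured by the
cop's next move.\<close>

definition guarding_strategy :: "'a set \<Rightarrow> ('a \<Rightarrow> 'a \<Rightarrow> bool) \<Rightarrow> 'a set \<Rightarrow> ('a list \<Rightarrow> 'a) \<Rightarrow> bool" where
  "guarding_strategy V adj H \<sigma> \<longleftrightarrow> legal_cop_strategy V adj \<sigma> \<and>
     (\<forall>r. robber_walk V adj r \<longrightarrow> (\<exists>N.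
        (\<forall>n\<ge>N. alive_before_cop \<sigma> r n \<longrightarrow> cpos \<sigma> r n \<in> H) \<and>
        (\<forall>n\<ge>N. alive_before_rob \<sigma> r n \<and> r n \<in> H \<longrightarrow> cpos \<sigma> r (Suc n) = r n)))"

text \<open>Leisurely: there is t such that among any t consecutive cop moves (that take place)
there is one in which the cop stays still.\<close>

definition leisurely_guardable1 :: "'a set \<Rightarrow> ('a \<Rightarrow> 'a \<Rightarrow> bool) \<Rightarrow> 'a set \<Rightarrow> bool" where
  "leisurely_guardable1 V adj H \<longleftrightarrow> (\<exists>\<sigma> t. guarding_strategy V adj H \<sigma> \<and>
     (\<forall>r. robber_walk V adj r \<longrightarrow> (\<forall>i. alive_before_cop \<sigma> r (i + t) \<longrightarrow>
        (\<exists>j. i \<le> j \<and> j < i + t \<and> cpos \<sigma> r (Suc j) = cpos \<sigma> r j))))"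

end

theory Submission
  imports Defs
begin

text \<open>
  The cop stays on P and chases the shadow of the robber: for a robber at x, the indices c with
  |c - l| \<le> d x (P ! l) for all l form a nonempty interval, which moves by at most one
  when the robber moves. A cop stepping towards this interval enters it after fewer than |P| moves
  and never leaves it again; a robber entering P at P ! m has shadow {m} while the cop is within
  one step of m, so he is caught at once.

  The cop only moves when he is outside the shadow of the robber's current position, and then
  towards it. He can reverse direction only when that shadow shrinks to a single index; for a
  vertex off P this would place it on a geodesic between two vertices of P, yielding a bypath, so
  the robber is on P and is caught. Hence the cop cannot move in |P| + 1 consecutive turns of a
  running game.
\<close>

section \<open>Walks and graph distance\<close>

lemma is_walk_Cons_Cons [simp]:
  "is_walk V adj (x # y # zs) \<longleftrightarrow> x \<in> V \<and> adj x y \<and> is_walk V adj (y # zs)"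
  unfolding is_walk_def by (auto simp: nth_Cons split: nat.splits)

lemma is_walk_singleton [simp]: "is_walk V adj [x] \<longleftrightarrow> x \<in> V"
  by (simp add: is_walk_def)

lemma is_walk_append:
  assumes "is_walk V adj xs" "is_walk V adj ys" "last xs = hd ys"
  shows "is_walk V adj (xs @ tl ys)"
  using assms
proof (induction xs rule: induct_list012)
  case 1
  then show ?case by (simp add: is_walk_def)
next
  case (2 x)
  then show ?case by (cases ys) auto
next
  case (3 x y zs)
  then show ?case by simp
qed

lemma hd_last_append_tl:
  assumes "xs \<noteq> []" "ys \<noteq> []" "last xs = hd ys"
  shows "hd (xs @ tl ys) = hd xs" "last (xs @ tl ys) = last ys"
  using assms by (cases ys; simp)+

lemma is_walk_rev:
  assumes "is_walk V adj xs" and "\<And>x y. adj x y \<Longrightarrow> adj y x"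
  shows "is_walk V adj (rev xs)"
  unfolding is_walk_def
proof (intro conjI allI impI)
  show "rev xs \<noteq> []" "set (rev xs) \<subseteq> V"
    using assms(1) by (auto simp: is_walk_def)
  fix i assume i: "Suc i < length (rev xs)"
  then have "adj (xs ! (length xs - Suc (Suc i))) (xs ! Suc (length xs - Suc (Suc i)))"
    using assms(1) by (auto simp: is_walk_def)
  moreover have "Suc (length xs - Suc (Suc i)) = length xs - Suc i"
    using i by simp
  ultimately show "adj (rev xs ! i) (rev xs ! Suc i)"
    using i by (auto simp: rev_nth intro: assms(2))
qed

definition segment :: "'a list \<Rightarrow> nat \<Rightarrow> nat \<Rightarrow> 'a list" where
  "segment xs p q = take (Suc (q - p)) (drop p xs)"

lemma length_segment: "p \<le> q \<Longrightarrow> q < length xs \<Longrightarrow> length (segment xs p q) = Suc (q - p)"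
  by (simp add: segment_def)

lemma nth_segment: "p \<le> q \<Longrightarrow> q < length xs \<Longrightarrow> i \<le> q - p \<Longrightarrow> segment xs p q ! i = xs ! (p + i)"
  by (simp add: segment_def)

lemma hd_last_segment:
  assumes "p \<le> q" "q < length xs"
  shows "hd (segment xs p q) = xs ! p" "last (segment xs p q) = xs ! q"
proof -
  have "segment xs p q \<noteq> []"
    using length_segment[OF assms] by auto
  then show "hd (segment xs p q) = xs ! p" "last (segment xs p q) = xs ! q"
    using nth_segment[OF assms, of 0] nth_segment[OF assms, of "q - p"] length_segment[OF assms] assms(1)
    by (simp_all add: hd_conv_nth last_conv_nth)
qed

lemma set_segment:
  assumes "p \<le> q" "q < length xs"
  shows "set (segment xs p q) = {xs ! t |t. p \<le> t \<and> t \<le> q}"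
proof (intro set_eqI iffI)
  fix y
  assume "y \<in> set (segment xs p q)"
  then obtain i where "i < Suc (q - p)" "y = segment xs p q ! i"
    using length_segment[OF assms] by (auto simp: in_set_conv_nth)
  moreover have "p + i \<le> q"
    using \<open>i < Suc (q - p)\<close> assms(1) by linarith
  ultimately show "y \<in> {xs ! t |t. p \<le> t \<and> t \<le> q}"
    using nth_segment[OF assms, of i] by (intro CollectI exI[of _ "p + i"]) simp
next
  fix y
  assume "y \<in> {xs ! t |t. p \<le> t \<and> t \<le> q}"
  then obtain t where "p \<le> t" "t \<le> q" "y = xs ! t"
    by blast
  then have "y = segment xs p q ! (t - p)" "t - p < length (segment xs p q)"
    using nth_segment[OF assms, of "t - p"] length_segment[OF assms] by simp_all
  then show "y \<in> set (segment xs p q)"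
    by simp
qed

lemma is_walk_segment:
  assumes "is_walk V adj xs" "p \<le> q" "q < length xs"
  shows "is_walk V adj (segment xs p q)"
  unfolding is_walk_def
proof (intro conjI allI impI)
  show "segment xs p q \<noteq> []"
    using length_segment[OF assms(2,3)] by auto
  show "set (segment xs p q) \<subseteq> V"
    using assms(1) unfolding segment_def is_walk_def by (meson order_trans set_drop_subset set_take_subset)
  fix i
  assume "Suc i < length (segment xs p q)"
  then show "adj (segment xs p q ! i) (segment xs p q ! Suc i)"
    using assms length_segment[OF assms(2,3)] nth_segment[OF assms(2,3)] unfolding is_walk_def by auto
qed

lemma walk_length_Suc: "is_walk V adj xs \<Longrightarrow> length xs = Suc (length xs - 1)"
  by (cases xs) (auto simp: is_walk_def)

lemma gdist_le_walk:
  assumes "is_walk V adj xs" "hd xs = x" "last xs = y"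
  shows "gdist V adj x y \<le> length xs - 1"
  unfolding gdist_def using assms walk_length_Suc[OF assms(1)] by (intro Least_le) auto

lemma gdist_attained:
  assumes "is_walk V adj xs" "hd xs = x" "last xs = y"
  obtains ys where "is_walk V adj ys" "hd ys = x" "last ys = y" "length ys = Suc (gdist V adj x y)"
proof -
  have "\<exists>n ys. is_walk V adj ys \<and> hd ys = x \<and> last ys = y \<and> length ys = Suc n"
    using assms walk_length_Suc[OF assms(1)] by blast
  from LeastI_ex[OF this] show ?thesis
    using that unfolding gdist_def by blast
qed

lemma gdist_segment:
  assumes "is_walk V adj xs" "p \<le> q" "q < length xs"
  shows "gdist V adj (xs ! p) (xs ! q) \<le> q - p"
  using gdist_le_walk[OF is_walk_segment[OF assms] hd_last_segment[OF assms(2,3)]]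
    length_segment[OF assms(2,3)] by simp

lemma gdist_self: "x \<in> V \<Longrightarrow> gdist V adj x x = 0"
  using gdist_le_walk[of V adj "[x]"] by simp

lemma gdist_sym_if_adj_sym:
  assumes "\<And>x y. adj x y \<Longrightarrow> adj y x"
  shows "gdist V adj x y = gdist V adj y x"
proof -
  have reverse: "\<exists>xs. is_walk V adj xs \<and> hd xs = y \<and> last xs = x \<and> length xs = Suc n"
    if "is_walk V adj xs" "hd xs = x" "last xs = y" "length xs = Suc n" for x y xs n
    using that is_walk_rev[OF that(1) assms] by (intro exI[of _ "rev xs"]) (simp add: hd_rev last_rev)
  have "(\<exists>xs. is_walk V adj xs \<and> hd xs = x \<and> last xs = y \<and> length xs = Suc n) \<longleftrightarrow>
      (\<exists>xs. is_walk V adj xs \<and> hd xs = y \<and> last xs = x \<and> length xs = Suc n)" for n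
    using reverse by blast
  then show ?thesis
    unfolding gdist_def by simp
qed

locale connected_simple_graph =
  fixes V :: "'a set" and adj :: "'a \<Rightarrow> 'a \<Rightarrow> bool"
  assumes connected: "connected_graph V adj"
begin

abbreviation d :: "'a \<Rightarrow> 'a \<Rightarrow> nat" where
  "d \<equiv> gdist V adj"

lemma adj_sym: "adj x y \<Longrightarrow> adj y x"
  using connected unfolding connected_graph_def graph_def by blast

lemma shortest_walk:
  assumes "x \<in> V" "y \<in> V"
  obtains xs where "is_walk V adj xs" "hd xs = x" "last xs = y" "length xs = Suc (d x y)"
proof -
  obtain xs where "is_walk V adj xs" "hd xs = x" "last xs = y"
    using connected assms unfolding connected_graph_def by blast
  then show ?thesis
    using that by (rule gdist_attained)
qed

lemma gdist_eq_0:
  assumes "x \<in> V" "y \<in> V" "d x y = 0"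
  shows "x = y"
proof -
  obtain xs where "hd xs = x" "last xs = y" "length xs = Suc (d x y)"
    using assms(1,2) by (rule shortest_walk)
  moreover from this obtain a where "xs = [a]"
    using assms(3) by (cases xs) auto
  ultimately show ?thesis
    by simp
qed

lemma gdist_eq_1:
  assumes "x \<in> V" "y \<in> V" "d x y = 1"
  shows "adj x y"
proof -
  obtain xs where xs: "is_walk V adj xs" "hd xs = x" "last xs = y" "length xs = Suc (d x y)"
    using assms(1,2) by (rule shortest_walk)
  moreover have "xs \<noteq> []"
    using xs(4) by auto
  ultimately have "xs ! 0 = x" "xs ! Suc 0 = y"
    using assms(3) by (simp_all add: hd_conv_nth last_conv_nth)
  moreover have "adj (xs ! 0) (xs ! Suc 0)"
    using xs(1,4) assms(3) by (simp add: is_walk_def)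
  ultimately show ?thesis
    by simp
qed

lemma shortest_walk_via:
  assumes "x \<in> V" "y \<in> V" "z \<in> V"
  obtains xs where "is_walk V adj xs" "hd xs = x" "last xs = z"
    "length xs = Suc (d x y + d y z)" "xs ! d x y = y"
proof -
  obtain ys where ys: "is_walk V adj ys" "hd ys = x" "last ys = y" "length ys = Suc (d x y)"
    using assms(1,2) by (rule shortest_walk)
  obtain zs where zs: "is_walk V adj zs" "hd zs = y" "last zs = z" "length zs = Suc (d y z)"
    using assms(2,3) by (rule shortest_walk)
  have join: "ys \<noteq> []" "zs \<noteq> []" "last ys = hd zs"
    using ys(3,4) zs(2,4) by auto
  show ?thesis
  proof (rule that)
    show "is_walk V adj (ys @ tl zs)"
      using is_walk_append[OF ys(1) zs(1) join(3)] .
    show "hd (ys @ tl zs) = x" "last (ys @ tl zs) = z"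
      using hd_last_append_tl[OF join] ys(2) zs(3) by simp_all
    show "length (ys @ tl zs) = Suc (d x y + d y z)"
      using ys(4) zs(4) by simp
    show "(ys @ tl zs) ! d x y = y"
      using ys(3,4) join(1) by (simp add: nth_append last_conv_nth)
  qed
qed

lemma gdist_triangle:
  assumes "x \<in> V" "y \<in> V" "z \<in> V"
  shows "d x z \<le> d x y + d y z"
proof -
  obtain xs where "is_walk V adj xs" "hd xs = x" "last xs = z" "length xs = Suc (d x y + d y z)"
    using assms by (rule shortest_walk_via)
  then show ?thesis
    using gdist_le_walk by fastforce
qed

lemma gdist_sym: "d x y = d y x"
  using adj_sym by (rule gdist_sym_if_adj_sym)

lemma gdist_step:
  assumes "x \<in> V" "y \<in> V" "z \<in> V" "x = y \<or> adj x y"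
  shows "d y z \<le> d x z + 1"
proof -
  have "d y x \<le> 1"
  proof (cases "x = y")
    case False
    then have "is_walk V adj [y, x]"
      using assms adj_sym by simp
    then show ?thesis
      using gdist_le_walk[of V adj "[y, x]"] by simp
  qed (simp add: gdist_self assms)
  then show ?thesis
    using gdist_triangle[of y x z] assms by linarith
qed

lemma gdist_squeeze:
  assumes "u \<in> V" "v \<in> V" "a \<in> V" "b \<in> V"
    and "d u a + d a v \<le> n" "n + d v b \<le> d u b"
  shows "d u v = n"
  using gdist_triangle[of u a v] gdist_triangle[of u v b] assms by linarith

end

section \<open>Isometric paths\<close>

lemma path_graph_walk: "xs \<noteq> [] \<Longrightarrow> is_walk (set xs) (path_adj xs) xs"
  unfolding is_walk_def path_adj_def by auto

lemma path_adj_nth: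
  assumes "distinct xs" "p < length xs" "path_adj xs (xs ! p) y"
  obtains q where "q < length xs" "y = xs ! q" "q = Suc p \<or> p = Suc q"
proof -
  obtain i where i: "Suc i < length xs"
    "(xs ! p = xs ! i \<and> y = xs ! Suc i) \<or> (y = xs ! i \<and> xs ! p = xs ! Suc i)"
    using assms(3) unfolding path_adj_def by blast
  have "p = i \<and> y = xs ! Suc i \<or> p = Suc i \<and> y = xs ! i"
    using i nth_eq_iff_index_eq[OF assms(1,2)] by auto
  then show ?thesis
    using that[of "Suc i"] that[of i] i(1) by auto
qed

lemma path_graph_walk_length:
  assumes "distinct xs" "is_walk (set xs) (path_adj xs) ws"
    "hd ws = xs ! p" "last ws = xs ! q" "p < length xs" "q < length xs"
  shows "q < p + length ws"
  using assms(2-)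
proof (induction ws arbitrary: p)
  case (Cons w ws)
  show ?case
  proof (cases ws)
    case Nil
    then show ?thesis
      using Cons.prems assms(1) nth_eq_iff_index_eq by fastforce
  next
    case (Cons w' ws')
    then have "path_adj xs (xs ! p) w'" "is_walk (set xs) (path_adj xs) ws"
      using Cons.prems(1,2) by auto
    then obtain p' where "p' < length xs" "w' = xs ! p'" "p' = Suc p \<or> p = Suc p'"
      using path_adj_nth[OF assms(1) \<open>p < length xs\<close>] by metis
    moreover have "q < p' + length ws"
      using Cons.IH \<open>is_walk (set xs) (path_adj xs) ws\<close> \<open>ws = w' # ws'\<close> Cons.prems(3,5) calculation
      by auto
    ultimately show ?thesis
      by auto
  qed
qed (simp add: is_walk_def)

lemma path_graph_gdist:
  assumes "distinct xs" "p \<le> q" "q < length xs"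
  shows "gdist (set xs) (path_adj xs) (xs ! p) (xs ! q) = q - p"
proof (rule order_antisym)
  have "xs \<noteq> []"
    using assms(3) by auto
  then show "gdist (set xs) (path_adj xs) (xs ! p) (xs ! q) \<le> q - p"
    using gdist_segment[OF path_graph_walk assms(2,3)] by simp
  obtain ws where "is_walk (set xs) (path_adj xs) ws" "hd ws = xs ! p" "last ws = xs ! q"
    "length ws = Suc (gdist (set xs) (path_adj xs) (xs ! p) (xs ! q))"
    using is_walk_segment[OF path_graph_walk[OF \<open>xs \<noteq> []\<close>] assms(2,3)] hd_last_segment[OF assms(2,3)]
    by (rule gdist_attained)
  then show "q - p \<le> gdist (set xs) (path_adj xs) (xs ! p) (xs ! q)"
    using path_graph_walk_length[OF assms(1)] assms(2,3) by fastforce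
qed

lemma isometric_path_gdist:
  assumes "isometric_path V adj P" "p \<le> q" "q < length P"
  shows "gdist V adj (P ! p) (P ! q) = q - p"
proof -
  have "P ! p \<in> set P" "P ! q \<in> set P"
    using assms(2,3) by simp_all
  then have "gdist V adj (P ! p) (P ! q) = gdist (set P) (path_adj P) (P ! p) (P ! q)"
    using assms(1) unfolding isometric_path_def by simp
  also have "\<dots> = q - p"
    using assms by (intro path_graph_gdist) (simp_all add: isometric_path_def is_path_def)
  finally show ?thesis .
qed

lemma isometric_path_in_V: "isometric_path V adj P \<Longrightarrow> p < length P \<Longrightarrow> P ! p \<in> V"
  by (auto simp: isometric_path_def is_path_def is_walk_def)

context connected_simple_graph
begin

lemma isometric_pathI:
  assumes "xs \<noteq> []" "set xs \<subseteq> V"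
    and dist: "\<And>p q. p \<le> q \<Longrightarrow> q < length xs \<Longrightarrow> d (xs ! p) (xs ! q) = q - p"
  shows "isometric_path V adj xs"
proof -
  have in_V: "xs ! i \<in> V" if "i < length xs" for i
    using assms(2) that by auto
  have walk: "is_walk V adj xs"
    unfolding is_walk_def
    using assms(1,2) dist[of _ "Suc _"] in_V gdist_eq_1 by (simp add: Suc_lessD)
  have distinct: "distinct xs"
    unfolding distinct_conv_nth
  proof (intro allI impI)
    fix i j
    assume ij: "i < length xs" "j < length xs" "i \<noteq> j"
    show "xs ! i \<noteq> xs ! j"
    proof
      assume "xs ! i = xs ! j"
      then have "d (xs ! i) (xs ! j) = 0" "d (xs ! j) (xs ! i) = 0"
        using gdist_self[OF in_V[OF ij(1)]] by simp_all
      then show False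
        using dist[of i j] dist[of j i] ij by (cases "i \<le> j") auto
    qed
  qed
  have ordered: "gdist (set xs) (path_adj xs) (xs ! p) (xs ! q) = d (xs ! p) (xs ! q)"
    if "p \<le> q" "q < length xs" for p q
    using path_graph_gdist[OF distinct that] dist[OF that] by simp
  have path_adj_sym: "path_adj xs x y \<Longrightarrow> path_adj xs y x" for x y
    unfolding path_adj_def by blast
  have "gdist (set xs) (path_adj xs) (xs ! p) (xs ! q) = d (xs ! p) (xs ! q)"
    if "p < length xs" "q < length xs" for p q
  proof (cases "p \<le> q")
    case False
    then show ?thesis
      using ordered[of q p] that gdist_sym gdist_sym_if_adj_sym[where adj = "path_adj xs", OF path_adj_sym]
      by simp
  qed (use ordered that in simp)
  then show ?thesis
    unfolding isometric_path_def is_path_def using walk distinct by (auto simp: in_set_conv_nth)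
qed

lemma shortest_walk_gdist_nth:
  assumes "is_walk V adj xs" "length xs = Suc (d (hd xs) (last xs))" "p \<le> q" "q < length xs"
  shows "d (xs ! p) (xs ! q) = q - p"
proof -
  obtain L where "length xs = Suc L"
    using assms(2) by blast
  moreover have "xs \<noteq> []"
    using assms(4) by auto
  ultimately have "hd xs = xs ! 0" "last xs = xs ! L"
    by (simp_all add: hd_conv_nth last_conv_nth)
  moreover have "d (hd xs) (last xs) = L"
    using assms(2) \<open>length xs = Suc L\<close> by simp
  ultimately have ends: "d (xs ! 0) (xs ! L) = L"
    by simp
  have "set xs \<subseteq> V"
    using assms(1) by (simp add: is_walk_def)
  then have in_V: "xs ! 0 \<in> V" "xs ! p \<in> V" "xs ! q \<in> V" "xs ! L \<in> V"
    using assms(3,4) \<open>length xs = Suc L\<close> by (simp_all add: subset_iff)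
  have "p < length xs" "L < length xs"
    using assms(3,4) \<open>length xs = Suc L\<close> by simp_all
  then have "d (xs ! 0) (xs ! p) \<le> p" "d (xs ! q) (xs ! L) \<le> L - q" "d (xs ! p) (xs ! q) \<le> q - p"
    using gdist_segment[OF assms(1), of 0 p] gdist_segment[OF assms(1), of q L]
      gdist_segment[OF assms(1), of p q] assms(3,4) \<open>length xs = Suc L\<close> by simp_all
  moreover have "L \<le> d (xs ! 0) (xs ! p) + d (xs ! p) (xs ! q) + d (xs ! q) (xs ! L)"
    using ends gdist_triangle[OF in_V(1,2,4)] gdist_triangle[OF in_V(2,3,4)] by linarith
  ultimately show ?thesis
    using assms(3,4) \<open>length xs = Suc L\<close> by linarith
qed

lemma shortest_walk_isometric:
  assumes "is_walk V adj xs" "length xs = Suc (d (hd xs) (last xs))"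
  shows "isometric_path V adj xs"
proof (rule isometric_pathI)
  show "xs \<noteq> []" "set xs \<subseteq> V"
    using assms(1) by (simp_all add: is_walk_def)
qed (rule shortest_walk_gdist_nth[OF assms])

end

section \<open>Bypaths\<close>

lemma splice_nth:
  assumes "I < J" "J < length P" "length W = Suc (J - I)" "hd W = P ! I" "last W = P ! J"
  defines "P' \<equiv> take (Suc I) P @ butlast (tl W) @ drop J P"
  shows "length P' = length P"
    and "p < length P \<Longrightarrow> p \<le> I \<or> J \<le> p \<Longrightarrow> P' ! p = P ! p"
    and "I \<le> p \<Longrightarrow> p \<le> J \<Longrightarrow> P' ! p = W ! (p - I)"
proof -
  have "W \<noteq> []"
    using assms(3) by auto
  then have W: "W ! 0 = P ! I" "W ! (J - I) = P ! J"
    using assms(3-5) by (simp_all add: hd_conv_nth last_conv_nth)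
  have len: "length (take (Suc I) P) = Suc I" "length (butlast (tl W)) = J - Suc I"
    using assms(1-3) by auto
  show "length P' = length P"
    using assms(1-3) by (simp add: P'_def)
  have middle: "P' ! p = W ! (p - I)" if "I < p" "p < J" for p
    using that len assms(3) by (simp add: P'_def nth_append nth_butlast nth_tl Suc_diff_Suc diff_less_mono)
  have right: "P' ! p = P ! p" if "J \<le> p" "p < length P" for p
  proof -
    have "\<not> p - Suc I < J - Suc I" "\<not> p < Suc I"
      using that assms(1) by linarith+
    then have "P' ! p = drop J P ! (p - Suc I - (J - Suc I))"
      using len by (simp add: P'_def nth_append)
    also have "\<dots> = P ! p"
      using that assms(1) by simp
    finally show ?thesis .
  qed
  have left: "P' ! p = P ! p" if "p \<le> I" for p
    using that len by (simp add: P'_def nth_append)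
  show "P' ! p = P ! p" if "p < length P" "p \<le> I \<or> J \<le> p"
    using that left right by blast
  show "P' ! p = W ! (p - I)" if "I \<le> p" "p \<le> J"
    using that middle left[of I] right[of J] W assms(2) by (cases "p = I \<or> p = J") auto
qed

lemma nearest_elements_around:
  fixes S :: "nat set"
  assumes "0 \<in> S" "L \<in> S" "c \<notin> S" "c \<le> L"
  obtains i j where "i < c" "c < j" "j \<le> L" "i \<in> S" "j \<in> S" "\<forall>p. i < p \<and> p < j \<longrightarrow> p \<notin> S"
proof -
  let ?below = "{p \<in> S. p < c}" and ?above = "{p \<in> S. c < p \<and> p \<le> L}"
  have "0 < c" "c < L"
    using assms by (auto intro: le_neq_implies_less)
  then have "0 \<in> ?below" "L \<in> ?above" "finite ?below" "finite ?above"
    using assms(1,2) by auto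
  then have i: "Max ?below \<in> ?below" and j: "Min ?above \<in> ?above"
    using Max_in[of ?below] Min_in[of ?above] by blast+
  have gap: "p \<notin> S" if "Max ?below < p" "p < Min ?above" for p
  proof
    assume "p \<in> S"
    show False
    proof (cases "p < c")
      case True
      then have "p \<le> Max ?below"
        using \<open>p \<in> S\<close> by (intro Max_ge[OF \<open>finite ?below\<close>]) simp
      then show False
        using that(1) by simp
    next
      case False
      moreover have "p \<noteq> c" "p \<le> L"
        using assms(3) \<open>p \<in> S\<close> that(2) j by auto
      ultimately have "Min ?above \<le> p"
        using \<open>p \<in> S\<close> by (intro Min_le[OF \<open>finite ?above\<close>]) simp
      then show False
        using that(2) by simp
    qed
  qed
  show ?thesis
  proof (rule that[of "Max ?below" "Min ?above"])
    show "\<forall>p. Max ?below < p \<and> p < Min ?above \<longrightarrow> p \<notin> S"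
      using gap by blast
  qed (use i j in simp_all)
qed

context connected_simple_graph
begin

lemma splice_gdist:
  assumes P: "isometric_path V adj P" and W: "isometric_path V adj W"
    and IJ: "I < J" "J < length P"
    and ends: "length W = Suc (J - I)" "hd W = P ! I" "last W = P ! J"
    and pq: "p \<le> q" "q < length P"
  defines "P' \<equiv> take (Suc I) P @ butlast (tl W) @ drop J P"
  shows "d (P' ! p) (P' ! q) = q - p"
proof -
  note nth = splice_nth[OF IJ ends, folded P'_def]
  have "W \<noteq> []"
    using ends(1) by auto
  then have W_ends: "W ! 0 = P ! I" "W ! (J - I) = P ! J"
    using ends by (simp_all add: hd_conv_nth last_conv_nth)
  have dP: "d (P ! p) (P ! q) = q - p" if "p \<le> q" "q < length P" for p q
    using isometric_path_gdist[OF P that] .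
  have dW: "d (W ! (p - I)) (W ! (q - I)) = q - p" if "I \<le> p" "p \<le> q" "q \<le> J" for p q
    using isometric_path_gdist[OF W, of "p - I" "q - I"] that ends(1) by simp
  have WV: "W ! (i - I) \<in> V" if "i \<le> J" for i
    using isometric_path_in_V[OF W] that ends(1) by simp
  have PV: "P ! i \<in> V" if "i < length P" for i
    using isometric_path_in_V[OF P] that .
  consider "p \<le> I \<or> J \<le> p" "q \<le> I \<or> J \<le> q" | "I \<le> p" "q \<le> J"
    | "p < I" "I < q" "q < J" | "I < p" "p < J" "J < q"
    using pq by linarith
  then show ?thesis
  proof cases
    case 1
    then show ?thesis
      using nth dP pq by simp
  next
    case 2
    then show ?thesis
      using nth(3) dW pq(1) by simp
  next
    case 3
    have "d (P ! p) (W ! (q - I)) = q - p"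
      using dP[of p I] dP[of p J] dW[of I q] dW[of q J] W_ends 3 IJ
      by (intro gdist_squeeze[where a = "P ! I" and b = "P ! J"]) (simp_all add: PV WV)
    then show ?thesis
      using nth 3 pq by simp
  next
    case 4
    have "d (P ! q) (W ! (p - I)) = q - p"
      using dP[of J q] dP[of I q] dW[of p J] dW[of I p] W_ends 4 pq gdist_sym
      by (intro gdist_squeeze[where a = "P ! J" and b = "P ! I"]) (simp_all add: PV WV)
    then show ?thesis
      using nth 4 pq gdist_sym by simp
  qed
qed

lemma isometric_path_splice:
  assumes P: "isometric_path V adj P" and W: "isometric_path V adj W"
    and IJ: "I < J" "J < length P"
    and ends: "length W = Suc (J - I)" "hd W = P ! I" "last W = P ! J"
  shows "isometric_path V adj (take (Suc I) P @ butlast (tl W) @ drop J P)"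
proof (rule isometric_pathI)
  show "take (Suc I) P @ butlast (tl W) @ drop J P \<noteq> []"
    using IJ by simp
  show "set (take (Suc I) P @ butlast (tl W) @ drop J P) \<subseteq> V"
    using P W unfolding isometric_path_def is_path_def is_walk_def
    by (cases W) (auto dest: in_set_takeD in_set_dropD in_set_butlastD)
qed (use splice_gdist[OF assms] splice_nth(1)[OF IJ ends] in simp)

lemma shortest_walk_meets_isometric_path:
  assumes P: "isometric_path V adj P" and l: "l \<le> l'" "l' < length P"
    and Q: "is_walk V adj Q" "hd Q = P ! l" "last Q = P ! l'" "length Q = Suc (l' - l)"
    and meet: "t < length Q" "Q ! t \<in> set P"
  shows "Q ! t = P ! (l + t)"
proof -
  obtain m where m: "m < length P" "Q ! t = P ! m"
    using meet(2) by (auto simp: in_set_conv_nth)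
  have shortest: "length Q = Suc (d (hd Q) (last Q))"
    using Q(2-4) isometric_path_gdist[OF P l] by simp
  have "Q \<noteq> []"
    using Q(4) by auto
  then have ends: "Q ! 0 = P ! l" "Q ! (l' - l) = P ! l'"
    using Q(2-4) by (simp_all add: hd_conv_nth last_conv_nth)
  have "d (P ! l) (P ! m) = t" "d (P ! m) (P ! l') = l' - l - t"
    using shortest_walk_gdist_nth[OF Q(1) shortest, of 0 t]
      shortest_walk_gdist_nth[OF Q(1) shortest, of t "l' - l"] ends m(2) meet(1) Q(4) by simp_all
  then have "m = l + t"
    using isometric_path_gdist[OF P, of l m] isometric_path_gdist[OF P, of m l]
      isometric_path_gdist[OF P, of m l'] isometric_path_gdist[OF P, of l' m] gdist_sym l m(1)
    by (cases "l \<le> m"; cases "m \<le> l'") auto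
  then show ?thesis
    using m(2) by simp
qed

lemma bypath_of_detour:
  assumes P: "isometric_path V adj P" and l: "l \<le> l'" "l' < length P"
    and Q: "is_walk V adj Q" "hd Q = P ! l" "last Q = P ! l'" "length Q = Suc (l' - l)"
    and ij: "Suc i < j" "j \<le> l' - l" "Q ! i \<in> set P" "Q ! j \<in> set P"
    and detour: "\<And>t. i < t \<Longrightarrow> t < j \<Longrightarrow> Q ! t \<notin> set P"
  shows "bypath V adj P (segment Q i j)"
proof -
  let ?B = "segment Q i j"
  have range: "i \<le> j" "j < length Q"
    using ij(1,2) Q(4) by simp_all
  have ends: "Q ! i = P ! (l + i)" "Q ! j = P ! (l + j)"
    using shortest_walk_meets_isometric_path[OF P l Q] ij(3,4) range by simp_all
  have B: "hd ?B = P ! (l + i)" "last ?B = P ! (l + j)" "length ?B = Suc (j - i)"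
    using hd_last_segment[OF range] length_segment[OF range] ends by simp_all
  have "d (hd ?B) (last ?B) = j - i"
    using B(1,2) isometric_path_gdist[OF P, of "l + i" "l + j"] ij l by simp
  then have B_iso: "isometric_path V adj ?B"
    using is_walk_segment[OF Q(1) range] B(3) by (intro shortest_walk_isometric) simp_all
  have "set ?B \<inter> set P = {Q ! i, Q ! j}"
    using ij(3,4) detour range(1) unfolding set_segment[OF range] by (auto simp: le_less)
  moreover have "isometric_path V adj (take (Suc (l + i)) P @ butlast (tl ?B) @ drop (l + j) P)"
    using ij l B by (intro isometric_path_splice[OF P B_iso]) simp_all
  ultimately show ?thesis
    unfolding bypath_def using B_iso B ends ij l
    by (intro conjI exI[of _ "l + i"] exI[of _ "l + j"])
      (simp_all add: isometric_path_def is_path_def is_walk_def)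
qed

lemma bypath_through_vertex:
  assumes P: "isometric_path V adj P" and x: "x \<in> V" "x \<notin> set P"
    and l: "l < l'" "l' < length P" and x_between: "d (P ! l) x + d x (P ! l') = l' - l"
  shows "\<exists>B. bypath V adj P B"
proof -
  have PV: "P ! l \<in> V" "P ! l' \<in> V"
    using isometric_path_in_V[OF P] l by simp_all
  obtain Q where Q: "is_walk V adj Q" "hd Q = P ! l" "last Q = P ! l'"
    "length Q = Suc (d (P ! l) x + d x (P ! l'))" and Q_x: "Q ! d (P ! l) x = x"
    using PV(1) x(1) PV(2) by (rule shortest_walk_via)
  have "Q \<noteq> []"
    using Q(4) by auto
  then have "Q ! 0 = P ! l" "Q ! (l' - l) = P ! l'"
    using Q(2-4) x_between by (simp_all add: hd_conv_nth last_conv_nth)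
  then have "0 \<in> S" "l' - l \<in> S" "d (P ! l) x \<notin> S" "d (P ! l) x \<le> l' - l"
    if "S = {t. t \<le> l' - l \<and> Q ! t \<in> set P}" for S
    using that Q_x x(2) x_between l by auto
  then obtain i j where "i < d (P ! l) x" "d (P ! l) x < j" "j \<le> l' - l"
    "Q ! i \<in> set P" "Q ! j \<in> set P" "\<forall>t. i < t \<and> t < j \<longrightarrow> \<not> (t \<le> l' - l \<and> Q ! t \<in> set P)"
    by (rule nearest_elements_around[of "{t. t \<le> l' - l \<and> Q ! t \<in> set P}"]) auto
  then have "bypath V adj P (segment Q i j)"
    using Q x_between l by (intro bypath_of_detour[OF P]) auto
  then show ?thesis ..
qed

end

section \<open>The shadow of the robber\<close>

locale isometric_path_in_graph = connected_simple_graph +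
  fixes P :: "'a list"
  assumes isometric: "isometric_path V adj P"
begin

lemma path_nonempty: "P \<noteq> []"
  using isometric by (simp add: isometric_path_def is_path_def is_walk_def)

lemma path_in_V: "l < length P \<Longrightarrow> P ! l \<in> V"
  using isometric by (rule isometric_path_in_V)

lemma path_step_adj: "Suc l < length P \<Longrightarrow> adj (P ! l) (P ! Suc l)"
  using isometric by (simp add: isometric_path_def is_path_def is_walk_def)

lemma path_index_le: "l < length P \<Longrightarrow> l' < length P \<Longrightarrow> l' \<le> l + d (P ! l) (P ! l')"
  using isometric_path_gdist[OF isometric, of l l'] by (cases "l \<le> l'") simp_all

text \<open>The shadow of x: the indices c < |P| with |c - l| \<le> d x (P ! l) for all l < |P|.\<close>

definition shadow_lo :: "'a \<Rightarrow> nat" where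
  "shadow_lo x = Max (insert 0 ((\<lambda>l. l - d x (P ! l)) ` {..<length P}))"

definition shadow_hi :: "'a \<Rightarrow> nat" where
  "shadow_hi x = Min (insert (length P - 1) ((\<lambda>l. l + d x (P ! l)) ` {..<length P}))"

definition shadow :: "'a \<Rightarrow> nat set" where
  "shadow x = {shadow_lo x..shadow_hi x}"

lemma shadow_lo_le_iff: "shadow_lo x \<le> c \<longleftrightarrow> (\<forall>l<length P. l \<le> c + d x (P ! l))"
  unfolding shadow_lo_def by (subst Max_le_iff) (auto simp: le_diff_conv)

lemma le_shadow_hi_iff: "c \<le> shadow_hi x \<longleftrightarrow> c < length P \<and> (\<forall>l<length P. c \<le> l + d x (P ! l))"
proof -
  have "c \<le> length P - 1 \<longleftrightarrow> c < length P"
    using path_nonempty by (cases P) auto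
  then show ?thesis
    unfolding shadow_hi_def by (subst Min_ge_iff) auto
qed

lemma shadow_lo_le: "l < length P \<Longrightarrow> l \<le> shadow_lo x + d x (P ! l)"
  using shadow_lo_le_iff by blast

lemma shadow_hi_le: "l < length P \<Longrightarrow> shadow_hi x \<le> l + d x (P ! l)"
  using le_shadow_hi_iff by blast

lemma shadow_hi_less: "shadow_hi x < length P"
  using le_shadow_hi_iff by blast

lemma shadow_lo_less: "shadow_lo x < length P"
  using path_nonempty by (subst le_less_trans[where y = "length P - 1"]) (auto simp: shadow_lo_le_iff)

lemma shadow_lo_attained:
  assumes "0 < shadow_lo x"
  obtains l where "l < length P" "shadow_lo x + d x (P ! l) = l"
proof -
  have "shadow_lo x \<in> insert 0 ((\<lambda>l. l - d x (P ! l)) ` {..<length P})"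
    unfolding shadow_lo_def by (rule Max_in) auto
  then show ?thesis
    using assms that by auto
qed

lemma shadow_hi_attained:
  assumes "shadow_hi x < length P - 1"
  obtains l where "l < length P" "shadow_hi x = l + d x (P ! l)"
proof -
  have "shadow_hi x \<in> insert (length P - 1) ((\<lambda>l. l + d x (P ! l)) ` {..<length P})"
    unfolding shadow_hi_def by (rule Min_in) auto
  then show ?thesis
    using assms that by auto
qed

lemma shadow_lo_le_hi:
  assumes "x \<in> V"
  shows "shadow_lo x \<le> shadow_hi x"
  unfolding le_shadow_hi_iff
proof (intro conjI allI impI shadow_lo_less)
  fix l
  assume l: "l < length P"
  show "shadow_lo x \<le> l + d x (P ! l)"
  proof (cases "shadow_lo x = 0")
    case False
    then obtain l' where l': "l' < length P" "shadow_lo x + d x (P ! l') = l'"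
      using shadow_lo_attained by blast
    have "l' \<le> l + d (P ! l) x + d x (P ! l')"
      using path_index_le[OF l l'(1)] gdist_triangle[OF path_in_V[OF l] assms path_in_V[OF l'(1)]]
      by linarith
    then show ?thesis
      using l'(2) gdist_sym[of x "P ! l"] by linarith
  qed simp
qed

lemma shadow_lipschitz:
  assumes "x \<in> V" "y \<in> V" "x = y \<or> adj x y"
  shows "shadow_lo y \<le> shadow_lo x + 1" "shadow_hi x \<le> shadow_hi y + 1"
proof -
  have step: "d x (P ! l) \<le> d y (P ! l) + 1" if "l < length P" for l
    using gdist_step[OF assms(2,1) path_in_V[OF that]] assms(3) adj_sym by blast
  show "shadow_lo y \<le> shadow_lo x + 1"
    unfolding shadow_lo_le_iff
  proof (intro allI impI)
    fix l
    assume "l < length P"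
    then show "l \<le> shadow_lo x + 1 + d y (P ! l)"
      using shadow_lo_le[of l x] step[of l] by linarith
  qed
  have "shadow_hi x - 1 \<le> shadow_hi y"
    unfolding le_shadow_hi_iff
  proof (intro conjI allI impI)
    show "shadow_hi x - 1 < length P"
      using shadow_hi_less[of x] by linarith
    fix l
    assume "l < length P"
    then show "shadow_hi x - 1 \<le> l + d y (P ! l)"
      using shadow_hi_le[of l x] step[of l] by linarith
  qed
  then show "shadow_hi x \<le> shadow_hi y + 1"
    by linarith
qed

lemma shadow_path_vertex:
  assumes "m < length P"
  shows "shadow_lo (P ! m) = m" "shadow_hi (P ! m) = m"
proof -
  have dist: "l \<le> m + d (P ! m) (P ! l)" "m \<le> l + d (P ! m) (P ! l)" if "l < length P" for l
    using path_index_le[OF assms that] path_index_le[OF that assms] gdist_sym by simp_all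
  have "d (P ! m) (P ! m) = 0"
    using gdist_self[OF path_in_V[OF assms]] .
  then show "shadow_lo (P ! m) = m" "shadow_hi (P ! m) = m"
    using shadow_lo_le[OF assms, of "P ! m"] shadow_hi_le[OF assms, of "P ! m"] dist assms
    by (simp_all add: order_antisym shadow_lo_le_iff le_shadow_hi_iff)
qed

lemma gdist_off_path:
  assumes "x \<in> V" "x \<notin> set P" "l < length P"
  shows "0 < d x (P ! l)"
proof (rule ccontr)
  assume "\<not> 0 < d x (P ! l)"
  then have "x = P ! l"
    using gdist_eq_0[OF assms(1) path_in_V[OF assms(3)]] by simp
  then show False
    using assms(2,3) by simp
qed

lemma shadow_off_path:
  assumes "x \<in> V" "x \<notin> set P" "2 \<le> length P"
  shows "shadow_lo x \<le> length P - 2" "1 \<le> shadow_hi x"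
proof -
  note pos = gdist_off_path[OF assms(1,2)]
  show "shadow_lo x \<le> length P - 2"
    unfolding shadow_lo_le_iff
  proof (intro allI impI)
    fix l
    assume "l < length P"
    then show "l \<le> length P - 2 + d x (P ! l)"
      using pos[of l] assms(3) by linarith
  qed
  show "1 \<le> shadow_hi x"
    unfolding le_shadow_hi_iff
  proof (intro conjI allI impI)
    show "1 < length P"
      using assms(3) by simp
    fix l
    assume "l < length P"
    then show "1 \<le> l + d x (P ! l)"
      using pos[of l] by linarith
  qed
qed

lemma shadow_singleton_on_path:
  assumes bypath_free: "bypath_free V adj P" and "2 \<le> length P"
    and x: "x \<in> V" and singleton: "shadow_lo x = shadow_hi x"
  shows "x \<in> set P"
proof (rule ccontr)
  assume off: "x \<notin> set P"
  note pos = gdist_off_path[OF x off]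
  have "0 < shadow_lo x" "shadow_hi x < length P - 1"
    using shadow_off_path[OF x off assms(2)] singleton assms(2) by linarith+
  obtain l1 where l1: "l1 < length P" "shadow_lo x + d x (P ! l1) = l1"
    using \<open>0 < shadow_lo x\<close> by (rule shadow_lo_attained)
  obtain l2 where l2: "l2 < length P" "shadow_hi x = l2 + d x (P ! l2)"
    using \<open>shadow_hi x < length P - 1\<close> by (rule shadow_hi_attained)
  have "d (P ! l2) x = d x (P ! l2)"
    by (rule gdist_sym)
  then have "l2 < l1" "d (P ! l2) x + d x (P ! l1) = l1 - l2"
    using l1 l2 singleton pos[OF l1(1)] pos[OF l2(1)] by linarith+
  then obtain B where "bypath V adj P B"
    using bypath_through_vertex[OF isometric x off _ l1(1)] by blast
  then show False
    using bypath_free unfolding bypath_free_def by blast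
qed

end

section \<open>The shadow strategy\<close>

lemma alive_before_cop_no_capture:
  assumes "alive_before_cop \<sigma> r n" "Suc (Suc j) < n"
  shows "cpos \<sigma> r (Suc (Suc j)) \<noteq> r (Suc j)"
  using assms unfolding alive_before_cop_def by (metis diff_Suc_1 zero_less_Suc)

context isometric_path_in_graph
begin

definition shadow_step :: "nat \<Rightarrow> 'a \<Rightarrow> nat" where
  "shadow_step c x = (if c < shadow_lo x then Suc c else if shadow_hi x < c then c - 1 else c)"

definition shadow_strategy :: "'a list \<Rightarrow> 'a" where
  "shadow_strategy rs = P ! foldl shadow_step 0 rs"

abbreviation cop_index :: "(nat \<Rightarrow> 'a) \<Rightarrow> nat \<Rightarrow> nat" where
  "cop_index r n \<equiv> foldl shadow_step 0 (map r [0..<n])"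

lemma cpos_shadow_strategy: "cpos shadow_strategy r n = P ! cop_index r n"
  by (simp add: cpos_def shadow_strategy_def)

lemma cop_index_Suc: "cop_index r (Suc n) = shadow_step (cop_index r n) (r n)"
  by simp

lemma shadow_step_up: "c < shadow_lo x \<Longrightarrow> shadow_step c x = Suc c"
  by (simp add: shadow_step_def)

lemma shadow_step_down: "\<not> c < shadow_lo x \<Longrightarrow> shadow_hi x < c \<Longrightarrow> shadow_step c x = c - 1"
  by (simp add: shadow_step_def)

lemma shadow_step_in_shadow: "c \<in> shadow x \<Longrightarrow> shadow_step c x = c"
  by (simp add: shadow_step_def shadow_def)

lemma shadow_step_singleton:
  "shadow_lo x = m \<Longrightarrow> shadow_hi x = m \<Longrightarrow> c \<le> Suc m \<Longrightarrow> m \<le> Suc c \<Longrightarrow> shadow_step c x = m"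
  by (auto simp: shadow_step_def)

lemma shadow_step_cases:
  obtains "c < shadow_lo x" "shadow_step c x = Suc c"
  | "shadow_hi x < c" "\<not> c < shadow_lo x" "shadow_step c x = c - 1"
  | "c \<in> shadow x" "shadow_step c x = c"
  by (cases "c < shadow_lo x"; cases "shadow_hi x < c") (auto simp: shadow_step_def shadow_def)

lemma cop_index_less: "cop_index r n < length P"
proof (induction n)
  case (Suc n)
  then show ?case
    using shadow_lo_less[of "r n"]
    by (cases rule: shadow_step_cases[of "cop_index r n" "r n"]) simp_all
qed (simp add: path_nonempty)

lemma legal_shadow_strategy: "legal_cop_strategy V adj shadow_strategy"
  unfolding legal_cop_strategy_def cpos_shadow_strategy
proof (intro allI impI conjI)
  show "shadow_strategy [] \<in> V"
    using path_in_V path_nonempty by (simp add: shadow_strategy_def)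
  fix r n
  let ?c = "cop_index r n" and ?x = "r n"
  show "P ! cop_index r (Suc n) = P ! ?c \<or> adj (P ! ?c) (P ! cop_index r (Suc n))"
  proof (cases rule: shadow_step_cases[of ?c ?x])
    case 1
    then show ?thesis
      using path_step_adj[of ?c] shadow_lo_less[of ?x] by simp
  next
    case 2
    then show ?thesis
      using path_step_adj[of "?c - 1"] cop_index_less[of r n] adj_sym by simp
  qed simp
qed

lemma shadow_step_follows:
  assumes "x \<in> V" "y \<in> V" "x = y \<or> adj x y" "c \<in> shadow x"
  shows "shadow_step c y \<in> shadow y"
  using shadow_lipschitz[OF assms(1-3)] shadow_lo_le_hi[OF assms(2)] assms(4)
  by (auto simp: shadow_step_def shadow_def)

lemma robber_walk_step:
  assumes "robber_walk V adj r"
  shows "r n \<in> V" "r (Suc n) \<in> V" "r n = r (Suc n) \<or> adj (r n) (r (Suc n))"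
    "r (Suc n) = r n \<or> adj (r (Suc n)) (r n)"
  using assms adj_sym unfolding robber_walk_def by metis+

lemma cop_stays_in_shadow:
  assumes r: "robber_walk V adj r" and entered: "cop_index r (Suc n) \<in> shadow (r n)" and "n \<le> m"
  shows "cop_index r (Suc m) \<in> shadow (r m)"
  using \<open>n \<le> m\<close>
proof (induction m rule: dec_induct)
  case (step m)
  then show ?case
    using shadow_step_follows[OF robber_walk_step(1-3)[OF r]] by simp
qed (rule entered)

lemma cop_enters_shadow:
  assumes r: "robber_walk V adj r"
  shows "\<exists>n. cop_index r (Suc n) \<in> shadow (r n)"
proof (rule ccontr)
  assume never: "\<nexists>n. cop_index r (Suc n) \<in> shadow (r n)"
  then have outside: "cop_index r n \<notin> shadow (r n)" for n
    using shadow_step_in_shadow by (metis cop_index_Suc)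
  have climbing: "cop_index r n = n \<and> cop_index r n < shadow_lo (r n)" for n
  proof (induction n)
    case 0
    then show ?case
      using outside[of 0] by (simp add: shadow_def)
  next
    case (Suc n)
    then have "cop_index r (Suc n) = Suc n" "Suc n \<le> shadow_lo (r n)"
      using shadow_step_up by simp_all
    moreover have "cop_index r (Suc n) \<notin> shadow (r n)"
      using never by blast
    ultimately have "Suc n < shadow_lo (r n)"
      using shadow_lo_le_hi[OF robber_walk_step(1)[OF r, of n]] by (auto simp: shadow_def)
    then have "Suc n \<le> shadow_lo (r (Suc n))"
      using shadow_lipschitz(1)[OF robber_walk_step(2,1,4)[OF r, of n]] by linarith
    then show ?case
      using outside[of "Suc n"] \<open>cop_index r (Suc n) = Suc n\<close>
        shadow_lo_le_hi[OF robber_walk_step(2)[OF r, of n]] by (auto simp: shadow_def)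
  qed
  then show False
    using cop_index_less[of r "length P"] by simp
qed

lemma shadow_strategy_captures:
  assumes r: "robber_walk V adj r" and shadowed: "cop_index r (Suc n) \<in> shadow (r n)"
    and on_P: "r (Suc n) \<in> set P"
  shows "cpos shadow_strategy r (Suc (Suc n)) = r (Suc n)"
proof -
  obtain m where m: "m < length P" "r (Suc n) = P ! m"
    using on_P by (auto simp: in_set_conv_nth)
  have "d (r n) (P ! m) \<le> d (r (Suc n)) (P ! m) + 1"
    using gdist_step[OF robber_walk_step(2,1)[OF r] path_in_V[OF m(1)] robber_walk_step(4)[OF r]] .
  then have "d (r n) (P ! m) \<le> 1"
    using m(2) gdist_self[OF path_in_V[OF m(1)]] by simp
  then have "cop_index r (Suc n) \<le> Suc m" "m \<le> Suc (cop_index r (Suc n))"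
    using shadowed shadow_lo_le[OF m(1), of "r n"] shadow_hi_le[OF m(1), of "r n"]
    by (auto simp: shadow_def)
  then have "cop_index r (Suc (Suc n)) = m"
    using shadow_step_singleton shadow_path_vertex[OF m(1)] m(2) by simp
  then show ?thesis
    using m(2) by (simp add: cpos_shadow_strategy)
qed

theorem guarding_shadow_strategy: "guarding_strategy V adj (set P) shadow_strategy"
  unfolding guarding_strategy_def
proof (intro conjI allI impI legal_shadow_strategy)
  fix r
  assume r: "robber_walk V adj r"
  obtain n0 where n0: "cop_index r (Suc n0) \<in> shadow (r n0)"
    using cop_enters_shadow[OF r] by blast
  show "\<exists>N. (\<forall>n\<ge>N. alive_before_cop shadow_strategy r n \<longrightarrow> cpos shadow_strategy r n \<in> set P) \<and>
    (\<forall>n\<ge>N. alive_before_rob shadow_strategy r n \<and> r n \<in> set P \<longrightarrow>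
      cpos shadow_strategy r (Suc n) = r n)"
  proof (intro exI[of _ "Suc n0"] conjI allI impI)
    fix n
    show "cpos shadow_strategy r n \<in> set P"
      using cop_index_less by (simp add: cpos_shadow_strategy)
    assume "Suc n0 \<le> n" "alive_before_rob shadow_strategy r n \<and> r n \<in> set P"
    then obtain n' where "n = Suc n'" "n0 \<le> n'" "r (Suc n') \<in> set P"
      by (metis Suc_le_D Suc_le_mono)
    then show "cpos shadow_strategy r (Suc n) = r n"
      using shadow_strategy_captures[OF r cop_stays_in_shadow[OF r n0]] by simp
  qed
qed

lemma climbing_continues:
  assumes r: "robber_walk V adj r" and bypath_free: "bypath_free V adj P"
    and below: "cop_index r j < shadow_lo (r j)"
    and moves: "cop_index r (Suc (Suc j)) \<noteq> cop_index r (Suc j)"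
    and no_capture: "cpos shadow_strategy r (Suc (Suc j)) \<noteq> r (Suc j)"
  shows "cop_index r (Suc j) < shadow_lo (r (Suc j))"
proof (rule ccontr)
  let ?c = "cop_index r j" and ?y = "r (Suc j)"
  assume "\<not> cop_index r (Suc j) < shadow_lo ?y"
  moreover have step: "cop_index r (Suc j) = Suc ?c"
    using below shadow_step_up by simp
  moreover have "cop_index r (Suc j) \<notin> shadow ?y"
    using moves shadow_step_in_shadow by auto
  ultimately have "shadow_hi ?y < Suc ?c"
    by (auto simp: shadow_def)
  moreover have "shadow_lo (r j) \<le> shadow_lo ?y + 1"
    using shadow_lipschitz(1)[OF robber_walk_step(2,1,4)[OF r, of j]] .
  moreover have "shadow_lo ?y \<le> shadow_hi ?y"
    using shadow_lo_le_hi[OF robber_walk_step(2)[OF r, of j]] .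
  ultimately have singleton: "shadow_lo ?y = ?c" "shadow_hi ?y = ?c"
    using below by linarith+
  have "2 \<le> length P"
    using below shadow_lo_less[of "r j"] by linarith
  then have "?y \<in> set P"
    using shadow_singleton_on_path[OF bypath_free _ robber_walk_step(2)[OF r, of j]] singleton by simp
  then obtain m where "m < length P" "?y = P ! m"
    by (auto simp: in_set_conv_nth)
  then have "?y = P ! ?c"
    using shadow_path_vertex(1) singleton(1) by metis
  moreover have "cop_index r (Suc (Suc j)) = ?c"
    using shadow_step_singleton[OF singleton] step by simp
  ultimately show False
    using no_capture by (simp add: cpos_shadow_strategy)
qed

lemma descending_continues:
  assumes r: "robber_walk V adj r" and bypath_free: "bypath_free V adj P"
    and above: "shadow_hi (r j) < cop_index r j"
    and moves: "cop_index r (Suc (Suc j)) \<noteq> cop_index r (Suc j)"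
    and no_capture: "cpos shadow_strategy r (Suc (Suc j)) \<noteq> r (Suc j)"
  shows "shadow_hi (r (Suc j)) < cop_index r (Suc j)"
proof (rule ccontr)
  let ?c = "cop_index r j" and ?y = "r (Suc j)"
  assume "\<not> shadow_hi ?y < cop_index r (Suc j)"
  moreover have "\<not> ?c < shadow_lo (r j)"
    using above shadow_lo_le_hi[OF robber_walk_step(1)[OF r, of j]] by linarith
  then have step: "cop_index r (Suc j) = ?c - 1"
    using above shadow_step_down by simp
  moreover have "cop_index r (Suc j) \<notin> shadow ?y"
    using moves shadow_step_in_shadow by auto
  ultimately have "?c - 1 < shadow_lo ?y"
    by (auto simp: shadow_def)
  moreover have "shadow_hi ?y \<le> shadow_hi (r j) + 1"
    using shadow_lipschitz(2)[OF robber_walk_step(2,1,4)[OF r, of j]] .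
  moreover have "shadow_lo ?y \<le> shadow_hi ?y"
    using shadow_lo_le_hi[OF robber_walk_step(2)[OF r, of j]] .
  ultimately have singleton: "shadow_lo ?y = ?c" "shadow_hi ?y = ?c"
    using above by linarith+
  have "2 \<le> length P"
    using above cop_index_less[of r j] by linarith
  then have "?y \<in> set P"
    using shadow_singleton_on_path[OF bypath_free _ robber_walk_step(2)[OF r, of j]] singleton by simp
  then obtain m where "m < length P" "?y = P ! m"
    by (auto simp: in_set_conv_nth)
  then have "?y = P ! ?c"
    using shadow_path_vertex(1) singleton(1) by metis
  moreover have "cop_index r (Suc (Suc j)) = ?c"
    using shadow_step_singleton[OF singleton] step above by simp
  ultimately show False
    using no_capture by (simp add: cpos_shadow_strategy)
qed

lemma cop_climbs:
  assumes r: "robber_walk V adj r" and bypath_free: "bypath_free V adj P"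
    and below: "cop_index r i < shadow_lo (r i)"
    and moves: "\<And>j. i \<le> j \<Longrightarrow> j < i + n \<Longrightarrow> cop_index r (Suc j) \<noteq> cop_index r j"
    and no_capture: "\<And>j. Suc (Suc j) \<le> i + n \<Longrightarrow> cpos shadow_strategy r (Suc (Suc j)) \<noteq> r (Suc j)"
  shows "cop_index r (i + n) = cop_index r i + n"
proof -
  have still_below: "cop_index r (i + m) < shadow_lo (r (i + m))" if "m < n" for m
    using that
  proof (induction m)
    case (Suc m)
    then show ?case
      using climbing_continues[OF r bypath_free Suc.IH] moves[of "Suc (i + m)"] no_capture[of "i + m"]
      by simp
  qed (simp add: below)
  have "cop_index r (i + m) = cop_index r i + m" if "m \<le> n" for m
    using that
  proof (induction m)
    case (Suc m)
    then show ?case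
      using still_below[of m] shadow_step_up by simp
  qed simp
  then show ?thesis
    by simp
qed

lemma cop_descends:
  assumes r: "robber_walk V adj r" and bypath_free: "bypath_free V adj P"
    and above: "shadow_hi (r i) < cop_index r i"
    and moves: "\<And>j. i \<le> j \<Longrightarrow> j < i + n \<Longrightarrow> cop_index r (Suc j) \<noteq> cop_index r j"
    and no_capture: "\<And>j. Suc (Suc j) \<le> i + n \<Longrightarrow> cpos shadow_strategy r (Suc (Suc j)) \<noteq> r (Suc j)"
  shows "cop_index r i = cop_index r (i + n) + n"
proof -
  have still_above: "shadow_hi (r (i + m)) < cop_index r (i + m)" if "m < n" for m
    using that
  proof (induction m)
    case (Suc m)
    then show ?case
      using descending_continues[OF r bypath_free Suc.IH] moves[of "Suc (i + m)"] no_capture[of "i + m"]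
      by simp
  qed (simp add: above)
  have "cop_index r i = cop_index r (i + m) + m" if "m \<le> n" for m
    using that
  proof (induction m)
    case (Suc m)
    have "\<not> cop_index r (i + m) < shadow_lo (r (i + m))"
      using still_above[of m] Suc.prems shadow_lo_le_hi[OF robber_walk_step(1)[OF r, of "i + m"]]
      by linarith
    then show ?case
      using Suc still_above[of m] shadow_step_down by simp
  qed simp
  then show ?thesis
    by simp
qed

theorem shadow_strategy_leisurely:
  assumes r: "robber_walk V adj r" and bypath_free: "bypath_free V adj P"
    and alive: "alive_before_cop shadow_strategy r (i + Suc (length P))"
  shows "\<exists>j. i \<le> j \<and> j < i + Suc (length P) \<and> cpos shadow_strategy r (Suc j) = cpos shadow_strategy r j"
proof (rule ccontr)
  assume never_stays: "\<not> ?thesis"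
  have moves: "cop_index r (Suc j) \<noteq> cop_index r j" if "i \<le> j" "j < i + length P" for j
  proof
    assume "cop_index r (Suc j) = cop_index r j"
    then have "cpos shadow_strategy r (Suc j) = cpos shadow_strategy r j"
      unfolding cpos_shadow_strategy by (rule arg_cong)
    moreover have "j < i + Suc (length P)"
      using that(2) by simp
    ultimately show False
      using never_stays that(1) by blast
  qed
  have no_capture: "cpos shadow_strategy r (Suc (Suc j)) \<noteq> r (Suc j)"
    if "Suc (Suc j) \<le> i + length P" for j
    using alive_before_cop_no_capture[OF alive] that by simp
  have "cop_index r i \<notin> shadow (r i)"
    using moves[of i] shadow_step_in_shadow path_nonempty by auto
  then consider "cop_index r i < shadow_lo (r i)" | "shadow_hi (r i) < cop_index r i"
    by (auto simp: shadow_def)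
  then show False
  proof cases
    case 1
    then have "cop_index r (i + length P) = cop_index r i + length P"
      using cop_climbs[OF r bypath_free _ moves no_capture] by blast
    then show False
      using cop_index_less[of r "i + length P"] by simp
  next
    case 2
    then have "cop_index r i = cop_index r (i + length P) + length P"
      using cop_descends[OF r bypath_free _ moves no_capture] by blast
    then show False
      using cop_index_less[of r i] by simp
  qed
qed

end

theorem lemma4p1:
  fixes V :: "'a set" and adj :: "'a \<Rightarrow> 'a \<Rightarrow> bool" and P :: "'a list"
  assumes "connected_graph V adj"
    and "isometric_path V adj P"
    and "bypath_free V adj P"
  shows "leisurely_guardable1 V adj (set P)"
proof -
  interpret isometric_path_in_graph V adj P
    using assms(1,2) by unfold_locales
  show ?thesis
    unfolding leisurely_guardable1_def
    using guarding_shadow_strategy shadow_strategy_leisurely[OF _ assms(3)] by blast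
qed

end
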